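(* Assume $p_{X,Y}=p_Xp_{Y|X}$ satisfies $p_{X,Y}\ne p_Xp_Y$. (i) There exists a bijection $\sigma:\mathfrak{X}\to\mathfrak{X}$ such that, for $(X_1,Y_1)\sim p_{X,Y}$ and $X_2\sim p_X$ independent of $(X_1,Y_1)$, $$\Pr(\sigma(Y_1)=X_1)>\Pr(\sigma(Y_1)=X_2).$$ (ii) Fix such a $\sigma$. There is a constant $c>0$ depending only on $p_{X,Y}$ and $\sigma$ such that if the number of seeds satisfies $B\ge cn$ (in particular for some $B=\Theta(n)$, i.e. seed order $d=1$), then the estimate $$\hat I_{\mathrm{del}}(\sigma)=\arg\min_{I\subseteq[n],\,|I|=n-\tilde K} d_H\big(\tilde{\mathbf{G}}^{(1)}(I),\tilde{\mathbf{G}}^{(2)}_\sigma\big)$$ satisfies $\Pr\big(\hat I_{\mathrm{del}}(\sigma)=I_{\mathrm{del}}\big)\to1$ as $n\to\infty$, where $I_{\mathrm{del}}=\{j\in[n]:S_j=0\}$ and an error is declared whenever some $I\ne I_{\mathrm{del}}$ attains a distance no larger than that of $I_{\mathrm{del}}$.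
   Context: Seeds: $\mathbf{G}^{(1)}$ is a $B\times n$ matrix with i.i.d. entries from $p_X$ on the finite set $\mathfrak{X}$; $S^n$ has i.i.d. entries from $p_S$ on $\{0,\dots,s_{\max}\}$; $\mathbf{G}^{(2)}$ is the $B\times\sum_jS_j$ matrix obtained from $\mathbf{G}^{(1)}$ by replacing, in each row, entry $j$ by the empty string if $S_j=0$ and by $S_j$ conditionally i.i.d. outputs of the channel $p_{Y|X}$ with that entry as input if $S_j\ge1$ (rows of $\mathbf{G}^{(1)}$ and $\mathbf{G}^{(2)}$ correspond in order). $\tilde{\mathbf{G}}^{(2)}$ is the $B\times\tilde K$ matrix obtained from $\mathbf{G}^{(2)}$ by keeping exactly one of the $S_j$ noisy copies of each column $j$ with $S_j\ge1$ (so only deletions remain and $\tilde K=|\{j:S_j\ge1\}|$). $\tilde{\mathbf{G}}^{(2)}_\sigma$ is obtained by applying $\sigma$ entrywise to $\tilde{\mathbf{G}}^{(2)}$. For $I\subseteq[n]$ with $|I|=n-\tilde K$, $\tilde{\mathbf{G}}^{(1)}(I)$ is the $B\times\tilde K$ matrix obtained from $\mathbf{G}^{(1)}$ by discarding the columns with indices in $I$ (keeping the order of the rest). $d_H(\mathbf{A},\mathbf{A}')=\sum_{i\in[B]}\sum_{j\in[\tilde K]}\mathbb{1}[A_{i,j}\ne A'_{i,j}]$ for two $B\times\tilde K$ matrices. *)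

theory Defs
  imports "HOL-Probability.Probability"
begin

text \<open>Matrices are functions on index pairs (row i, column j), rows in [B] = {..<B},
  columns in [n] = {..<n} (0-based).\<close>

definition joint_pmf :: "'x pmf \<Rightarrow> ('x \<Rightarrow> 'y pmf) \<Rightarrow> ('x \<times> 'y) pmf" where
  "joint_pmf pX pYX = bind_pmf pX (\<lambda>x. map_pmf (\<lambda>y. (x, y)) (pYX x))"

definition out_pmf :: "'x pmf \<Rightarrow> ('x \<Rightarrow> 'y pmf) \<Rightarrow> 'y pmf" where
  "out_pmf pX pYX = bind_pmf pX pYX"

definition seed_G1 :: "'x pmf \<Rightarrow> nat \<Rightarrow> nat \<Rightarrow> (nat \<times> nat \<Rightarrow> 'x) pmf" where
  "seed_G1 pX B n = Pi_pmf ({..<B} \<times> {..<n}) undefined (\<lambda>_. pX)"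

definition rep_pattern :: "nat pmf \<Rightarrow> nat \<Rightarrow> (nat \<Rightarrow> nat) pmf" where
  "rep_pattern pS n = Pi_pmf {..<n} 0 (\<lambda>_. pS)"

text \<open>G2: entry (i,j) is the list of S j conditionally i.i.d. channel outputs with
  input G1(i,j) (empty list if S j = 0).\<close>
definition noisy_G2 :: "('x \<Rightarrow> 'y pmf) \<Rightarrow> nat \<Rightarrow> nat \<Rightarrow> (nat \<times> nat \<Rightarrow> 'x) \<Rightarrow> (nat \<Rightarrow> nat)
    \<Rightarrow> (nat \<times> nat \<Rightarrow> 'y list) pmf" where
  "noisy_G2 pYX B n G1 S =
     map_pmf (\<lambda>W (i, j). map (\<lambda>k. W (i, j, k)) [0..<S j])
       (Pi_pmf {(i, j, k). i < B \<and> j < n \<and> k < S j} undefined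
          (\<lambda>(i, j, k). pYX (G1 (i, j))))"

definition seeded_experiment :: "'x pmf \<Rightarrow> ('x \<Rightarrow> 'y pmf) \<Rightarrow> nat pmf \<Rightarrow> nat \<Rightarrow> nat
    \<Rightarrow> ((nat \<times> nat \<Rightarrow> 'x) \<times> (nat \<Rightarrow> nat) \<times> (nat \<times> nat \<Rightarrow> 'y list)) pmf" where
  "seeded_experiment pX pYX pS B n =
     bind_pmf (seed_G1 pX B n) (\<lambda>G1.
     bind_pmf (rep_pattern pS n) (\<lambda>S.
     map_pmf (\<lambda>G2. (G1, S, G2)) (noisy_G2 pYX B n G1 S)))"

definition retained_cols :: "(nat \<Rightarrow> nat) \<Rightarrow> nat \<Rightarrow> nat list" where
  "retained_cols S n = filter (\<lambda>j. 1 \<le> S j) [0..<n]"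

definition Ktilde :: "(nat \<Rightarrow> nat) \<Rightarrow> nat \<Rightarrow> nat" where
  "Ktilde S n = length (retained_cols S n)"

definition G2tilde :: "(nat \<times> nat \<Rightarrow> 'y list) \<Rightarrow> (nat \<Rightarrow> nat) \<Rightarrow> nat \<Rightarrow> (nat \<times> nat \<Rightarrow> 'y)" where
  "G2tilde G2 S n = (\<lambda>(i, t). hd (G2 (i, retained_cols S n ! t)))"

definition G1tilde :: "(nat \<times> nat \<Rightarrow> 'x) \<Rightarrow> nat \<Rightarrow> nat set \<Rightarrow> (nat \<times> nat \<Rightarrow> 'x)" where
  "G1tilde G1 n I = (\<lambda>(i, t). G1 (i, filter (\<lambda>j. j \<notin> I) [0..<n] ! t))"

definition hamming_dist :: "nat \<Rightarrow> nat \<Rightarrow> (nat \<times> nat \<Rightarrow> 'a) \<Rightarrow> (nat \<times> nat \<Rightarrow> 'a) \<Rightarrow> nat" where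
  "hamming_dist B K A A' = (\<Sum>i<B. \<Sum>j<K. if A (i, j) \<noteq> A' (i, j) then 1 else 0)"

definition I_del :: "(nat \<Rightarrow> nat) \<Rightarrow> nat \<Rightarrow> nat set" where
  "I_del S n = {j. j < n \<and> S j = 0}"

definition deletion_detected ::
  "('x \<Rightarrow> 'x) \<Rightarrow> nat \<Rightarrow> nat \<Rightarrow> (nat \<times> nat \<Rightarrow> 'x) \<Rightarrow> (nat \<Rightarrow> nat) \<Rightarrow> (nat \<times> nat \<Rightarrow> 'x list) \<Rightarrow> bool" where
  "deletion_detected \<sigma> B n G1 S G2 \<longleftrightarrow>
     (let K = Ktilde S n;
          Y = (\<sigma> \<circ> G2tilde G2 S n);
          D = (\<lambda>I. hamming_dist B K (G1tilde G1 n I) Y)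
      in \<forall>I. I \<subseteq> {..<n} \<and> card I = n - K \<and> I \<noteq> I_del S n \<longrightarrow> D (I_del S n) < D I)"

end

theory Submission
  imports Defs "HOL-Combinatorics.Transposition"
begin

(*
  Write D x y = p_{X,Y}(x, y) - p_X(x) p_Y(y); the advantage of a bijection \<sigma> in (i) is
  \<Sum>y. D (\<sigma> y) y, and D has zero row and column sums. If no bijection had positive advantage,
  averaging over the cyclic shifts of any bijection would show that every advantage is 0;
  comparing a bijection with its composition with a transposition then yields
  D x1 y1 + D x2 y2 = D x2 y1 + D x1 y2, which with the zero margins forces D = 0.

  For (ii), condition on the repetition pattern. For a wrong candidate I, the difference between
  the Hamming distances of I and of I_del is a sum over the B independent seed rows of terms
  bounded by the number m \<ge> 1 of misaligned positions, each with mean m times the advantage \<delta>.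
  Hoeffding's inequality bounds the probability that this sum is \<le> 0 by exp (- B \<delta>^2 / 2),
  and a union bound over the at most 2^n candidates gives an error probability of at most
  (2 exp (-2))^n once B \<ge> 4 n / \<delta>^2.
*)

lemma cyclic_permutation_family:
  "\<exists>\<pi> :: nat \<Rightarrow> 'a::finite \<Rightarrow> 'a.
     \<pi> 0 = id \<and> (\<forall>k. bij (\<pi> k)) \<and> (\<forall>y. bij_betw (\<lambda>k. \<pi> k y) {..<CARD('a)} UNIV)"
proof -
  define N where "N = CARD('a)"
  obtain e :: "'a \<Rightarrow> nat" where e: "bij_betw e UNIV {..<N}"
    unfolding N_def using ex_bij_betw_finite_nat[of "UNIV :: 'a set"] by (auto simp: atLeast0LessThan)
  define e' where "e' = inv_into UNIV e"
  have e'_e: "e' (e y) = y" for y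
    unfolding e'_def using e by (simp add: bij_betw_def)
  have e_e': "i < N \<Longrightarrow> e (e' i) = i" for i
    unfolding e'_def using e by (meson bij_betw_inv_into_right lessThan_iff)
  have e_lt: "e y < N" for y
    using e by (auto simp: bij_betw_def)
  define \<pi> where "\<pi> = (\<lambda>k y. e' ((e y + k) mod N))"
  have N_pos: "N > 0"
    unfolding N_def by simp
  have e_\<pi>: "e (\<pi> k y) = (e y + k) mod N" for k y
    unfolding \<pi>_def using N_pos by (simp add: e_e')
  show ?thesis
  proof (intro exI conjI allI)
    show "\<pi> 0 = id"
      using e_lt by (auto simp: \<pi>_def e'_e)
    fix k
    show "bij (\<pi> k)"
    proof -
      have "inj (\<pi> k)"
      proof (rule injI)
        fix y y' assume "\<pi> k y = \<pi> k y'"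
        then have "(e y + k) mod N = (e y' + k) mod N"
          by (metis e_\<pi>)
        then have "e y mod N = e y' mod N"
          using nat_mod_eq_iff by auto
        then have "e y = e y'"
          using e_lt by simp
        then show "y = y'"
          by (metis e'_e)
      qed
      then show ?thesis
        by (simp add: bij_def finite_UNIV_inj_surj)
    qed
  next
    fix y
    show "bij_betw (\<lambda>k. \<pi> k y) {..<CARD('a)} UNIV"
    proof -
      have "inj_on (\<lambda>k. \<pi> k y) {..<N}"
      proof (rule inj_onI)
        fix k k' assume "k \<in> {..<N}" "k' \<in> {..<N}" "\<pi> k y = \<pi> k' y"
        then have "(e y + k) mod N = (e y + k') mod N"
          by (metis e_\<pi>)
        then have "k mod N = k' mod N"
          using nat_mod_eq_iff by auto
        then show "k = k'"
          using \<open>k \<in> {..<N}\<close> \<open>k' \<in> {..<N}\<close> by simp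
      qed
      moreover have "card ((\<lambda>k. \<pi> k y) ` {..<N}) = CARD('a)"
        using card_image[OF \<open>inj_on _ _\<close>] unfolding N_def by simp
      ultimately show ?thesis
        unfolding bij_betw_def N_def by (simp add: card_subset_eq)
    qed
  qed
qed

lemma permutation_sums_vanish:
  fixes D :: "'a::finite \<Rightarrow> 'a \<Rightarrow> real"
  assumes col: "\<And>y. (\<Sum>x\<in>UNIV. D x y) = 0"
    and nonpos: "\<And>\<sigma>. bij \<sigma> \<Longrightarrow> (\<Sum>y\<in>UNIV. D (\<sigma> y) y) \<le> 0"
    and "bij \<tau>"
  shows "(\<Sum>y\<in>UNIV. D (\<tau> y) y) = 0"
proof -
  obtain \<pi> :: "nat \<Rightarrow> 'a \<Rightarrow> 'a"
    where \<pi>0: "\<pi> 0 = id" and bij_\<pi>: "\<And>k. bij (\<pi> k)"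
      and latin: "\<And>y. bij_betw (\<lambda>k. \<pi> k y) {..<CARD('a)} UNIV"
    using cyclic_permutation_family by blast
  define s where "s = (\<lambda>k. \<Sum>y\<in>UNIV. D (\<tau> (\<pi> k y)) y)"
  \<comment> \<open>the bijections \<open>\<tau> \<circ> \<pi> k\<close> send each \<open>y\<close> to every \<open>x\<close> exactly once\<close>
  have "(\<Sum>k<CARD('a). s k) = (\<Sum>y\<in>UNIV. \<Sum>k<CARD('a). D (\<tau> (\<pi> k y)) y)"
    unfolding s_def by (rule sum.swap)
  also have "\<dots> = (\<Sum>y\<in>UNIV. \<Sum>x\<in>UNIV. D x y)"
    using bij_betw_trans[OF latin \<open>bij \<tau>\<close>]
    by (intro sum.cong refl sum.reindex_bij_betw) (simp add: comp_def)
  finally have "(\<Sum>k<CARD('a). - s k) = 0"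
    by (simp add: col sum_negf)
  moreover have "0 \<le> - s k" for k
    using nonpos[OF bij_comp[OF bij_\<pi> \<open>bij \<tau>\<close>]] by (simp add: s_def)
  ultimately have "s 0 = 0"
    using sum_nonneg_eq_0_iff[of "{..<CARD('a)}" "\<lambda>k. - s k"] by simp
  then show ?thesis
    by (simp add: s_def \<pi>0)
qed

lemma zero_if_permutation_sums_nonpos:
  fixes D :: "'a::finite \<Rightarrow> 'a \<Rightarrow> real"
  assumes col: "\<And>y. (\<Sum>x\<in>UNIV. D x y) = 0"
    and row: "\<And>x. (\<Sum>y\<in>UNIV. D x y) = 0"
    and nonpos: "\<And>\<sigma>. bij \<sigma> \<Longrightarrow> (\<Sum>y\<in>UNIV. D (\<sigma> y) y) \<le> 0"
  shows "D x y = 0"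
proof -
  have exchange: "D x1 y1 + D x2 y2 = D x2 y1 + D x1 y2" for x1 x2 y1 y2
  proof (cases "x1 = x2 \<or> y1 = y2")
    case False
    define \<tau> where
      "\<tau> = Transposition.transpose x2 (Transposition.transpose x1 y1 y2) \<circ> Transposition.transpose x1 y1"
    define \<tau>' where "\<tau>' = \<tau> \<circ> Transposition.transpose y1 y2"
    have "Transposition.transpose x1 y1 y2 \<noteq> x1"
      using False by (cases "y2 = x1") auto
    then have \<tau>: "\<tau> y1 = x1" "\<tau> y2 = x2"
      using False by (auto simp: \<tau>_def)
    then have \<tau>': "\<tau>' y1 = x2" "\<tau>' y2 = x1" "\<And>y. y \<noteq> y1 \<Longrightarrow> y \<noteq> y2 \<Longrightarrow> \<tau>' y = \<tau> y"
      by (auto simp: \<tau>'_def)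
    have "bij \<tau>" "bij \<tau>'"
      by (simp_all add: \<tau>_def \<tau>'_def bij_comp)
    then have "(\<Sum>y\<in>UNIV. D (\<tau> y) y - D (\<tau>' y) y) = 0"
      using permutation_sums_vanish[OF col nonpos] by (simp add: sum_subtractf)
    also have "(\<Sum>y\<in>UNIV. D (\<tau> y) y - D (\<tau>' y) y) = (\<Sum>y\<in>{y1, y2}. D (\<tau> y) y - D (\<tau>' y) y)"
      by (rule sum.mono_neutral_right) (auto simp: \<tau>')
    finally show ?thesis
      using False \<tau> \<tau>' by simp
  qed auto
  have "real CARD('a) * real CARD('a) * D x y = (\<Sum>x'\<in>UNIV. \<Sum>y'\<in>UNIV. D x y + D x' y')"
    by (simp add: sum.distrib row)
  also have "\<dots> = (\<Sum>x'\<in>UNIV. \<Sum>y'\<in>UNIV. D x' y + D x y')"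
    by (simp add: exchange)
  also have "\<dots> = 0"
    by (simp add: sum.distrib row col flip: sum_distrib_left)
  finally show ?thesis
    by simp
qed

definition alignment_gap :: "'x pmf \<Rightarrow> ('x \<Rightarrow> 'y pmf) \<Rightarrow> ('y \<Rightarrow> 'x) \<Rightarrow> real" where
  "alignment_gap pX pYX \<sigma> =
     measure_pmf.prob (joint_pmf pX pYX) {(x, y). \<sigma> y = x}
   - measure_pmf.prob (pair_pmf (joint_pmf pX pYX) pX) {((x1, y1), x2). \<sigma> y1 = x2}"

lemma map_fst_joint_pmf: "map_pmf fst (joint_pmf pX pYX) = pX"
  by (simp add: joint_pmf_def map_bind_pmf map_pmf_comp bind_return_pmf' flip: map_pmf_def)

lemma map_snd_joint_pmf: "map_pmf snd (joint_pmf pX pYX) = out_pmf pX pYX"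
  by (simp add: joint_pmf_def out_pmf_def map_bind_pmf map_pmf_comp)

lemma pmf_map_fst_eq_sum:
  fixes p :: "('a \<times> 'b::finite) pmf"
  shows "pmf (map_pmf fst p) x = (\<Sum>y\<in>UNIV. pmf p (x, y))"
proof -
  have "pmf (map_pmf fst p) x = measure_pmf.prob p (Pair x ` UNIV)"
    unfolding pmf_map by (rule arg_cong[where f = "measure_pmf.prob p"]) auto
  then show ?thesis
    by (simp add: measure_measure_pmf_finite) (subst sum.reindex, auto simp: inj_on_def)
qed

lemma pmf_map_snd_eq_sum:
  fixes p :: "('a::finite \<times> 'b) pmf"
  shows "pmf (map_pmf snd p) y = (\<Sum>x\<in>UNIV. pmf p (x, y))"
proof -
  have "pmf (map_pmf snd p) y = measure_pmf.prob p ((\<lambda>x. (x, y)) ` UNIV)"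
    unfolding pmf_map by (rule arg_cong[where f = "measure_pmf.prob p"]) auto
  then show ?thesis
    by (simp add: measure_measure_pmf_finite) (subst sum.reindex, auto simp: inj_on_def)
qed

lemma prob_graph_eq_sum:
  fixes p :: "('a \<times> 'b::finite) pmf"
  shows "measure_pmf.prob p {(x, y). \<sigma> y = x} = (\<Sum>y\<in>UNIV. pmf p (\<sigma> y, y))"
proof -
  have "{(x, y). \<sigma> y = x} = (\<lambda>y. (\<sigma> y, y)) ` UNIV"
    by auto
  then show ?thesis
    by (simp add: measure_measure_pmf_finite) (subst sum.reindex, auto simp: inj_on_def)
qed

lemma alignment_gap_eq_sum:
  fixes pYX :: "'x \<Rightarrow> 'y::finite pmf"
  shows "alignment_gap pX pYX \<sigma> =
    (\<Sum>y\<in>UNIV. pmf (joint_pmf pX pYX) (\<sigma> y, y) - pmf pX (\<sigma> y) * pmf (out_pmf pX pYX) y)"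
proof -
  have "map_pmf (\<lambda>((x1, y1), x2). (x2, y1)) (pair_pmf (joint_pmf pX pYX) pX)
      = map_pmf (\<lambda>(y, x). (x, y)) (map_pmf (\<lambda>(u, x). (snd u, x)) (pair_pmf (joint_pmf pX pYX) pX))"
    by (simp add: map_pmf_comp case_prod_unfold)
  also have "\<dots> = pair_pmf pX (out_pmf pX pYX)"
    by (simp only: map_pair map_snd_joint_pmf map_pmf_ident flip: pair_commute_pmf)
  finally have swap: "pair_pmf pX (out_pmf pX pYX)
      = map_pmf (\<lambda>((x1, y1), x2). (x2, y1)) (pair_pmf (joint_pmf pX pYX) pX)" ..
  have "measure_pmf.prob (pair_pmf pX (out_pmf pX pYX)) {(x, y). \<sigma> y = x}
      = measure_pmf.prob (pair_pmf (joint_pmf pX pYX) pX)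
          ((\<lambda>((x1, y1), x2). (x2, y1)) -` {(x, y). \<sigma> y = x})"
    unfolding swap by (rule measure_map_pmf)
  also have "(\<lambda>((x1, y1), x2). (x2, y1)) -` {(x, y). \<sigma> y = x} = {((x1, y1), x2). \<sigma> y1 = x2}"
    by auto
  finally have mismatch: "measure_pmf.prob (pair_pmf pX (out_pmf pX pYX)) {(x, y). \<sigma> y = x}
      = measure_pmf.prob (pair_pmf (joint_pmf pX pYX) pX) {((x1, y1), x2). \<sigma> y1 = x2}" .
  show ?thesis
    by (simp add: alignment_gap_def prob_graph_eq_sum pmf_pair sum_subtractf mult.commute
        flip: mismatch)
qed

lemma exists_bij_alignment_gap_pos:
  fixes pX :: "'x::finite pmf" and pYX :: "'x \<Rightarrow> 'x pmf"
  assumes "joint_pmf pX pYX \<noteq> pair_pmf pX (out_pmf pX pYX)"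
  shows "\<exists>\<sigma>. bij \<sigma> \<and> alignment_gap pX pYX \<sigma> > 0"
proof (rule ccontr)
  assume no_gap: "\<not> ?thesis"
  define J where "J = joint_pmf pX pYX"
  define pY where "pY = out_pmf pX pYX"
  define D where "D = (\<lambda>x y. pmf J (x, y) - pmf pX x * pmf pY y)"
  have pX_marginal: "pmf pX x = (\<Sum>y\<in>UNIV. pmf J (x, y))" for x
    using pmf_map_fst_eq_sum[of J x] by (simp add: J_def map_fst_joint_pmf)
  have pY_marginal: "pmf pY y = (\<Sum>x\<in>UNIV. pmf J (x, y))" for y
    using pmf_map_snd_eq_sum[of J y] by (simp add: J_def pY_def map_snd_joint_pmf)
  have "D x y = 0" for x y
  proof (rule zero_if_permutation_sums_nonpos)
    show "(\<Sum>x\<in>UNIV. D x y) = 0" for y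
      by (simp add: D_def sum_subtractf pY_marginal sum_pmf_eq_1 flip: sum_distrib_right)
    show "(\<Sum>y\<in>UNIV. D x y) = 0" for x
      by (simp add: D_def sum_subtractf pX_marginal sum_pmf_eq_1 flip: sum_distrib_left)
    show "(\<Sum>y\<in>UNIV. D (\<sigma> y) y) \<le> 0" if "bij \<sigma>" for \<sigma>
      using no_gap that by (auto simp: alignment_gap_eq_sum D_def J_def pY_def not_less)
  qed
  then have "J = pair_pmf pX pY"
    by (intro pmf_eqI) (auto simp: D_def pmf_pair)
  with assms show False
    by (simp add: J_def pY_def)
qed

lemma Pi_pmf_map_indexed:
  assumes "finite A"
  shows "Pi_pmf A d (\<lambda>c. map_pmf (f c) (q c)) =
         map_pmf (\<lambda>g c. if c \<in> A then f c (g c) else d) (Pi_pmf A d' q)"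
proof -
  have "Pi_pmf A d (\<lambda>c. map_pmf (f c) (q c)) =
          Pi_pmf A d (\<lambda>c. q c \<bind> (\<lambda>x. return_pmf (f c x)))"
    by (simp add: map_pmf_def)
  also have "\<dots> = Pi_pmf A d' q \<bind> (\<lambda>g. Pi_pmf A d (\<lambda>c. return_pmf (f c (g c))))"
    by (rule Pi_pmf_bind[OF assms])
  also have "\<dots> = Pi_pmf A d' q \<bind> (\<lambda>g. return_pmf (\<lambda>c. if c \<in> A then f c (g c) else d))"
    using assms by simp
  also have "\<dots> = map_pmf (\<lambda>g c. if c \<in> A then f c (g c) else d) (Pi_pmf A d' q)"
    by (simp add: map_pmf_def)
  finally show ?thesis .
qed

lemma Pi_pmf_reindex:
  assumes "finite A" "inj_on h A"
  shows "map_pmf (\<lambda>g x. if x \<in> A then g (h x) else d) (Pi_pmf (h ` A) d p) = Pi_pmf A d (\<lambda>x. p (h x))"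
  using assms
proof (induction A rule: finite_induct)
  case (insert x A)
  then have "h x \<notin> h ` A" "inj_on h A"
    by auto
  have "Pi_pmf (insert x A) d (\<lambda>x. p (h x))
      = map_pmf (\<lambda>(y, f). f(x := y)) (pair_pmf (p (h x)) (Pi_pmf A d (\<lambda>x. p (h x))))"
    using insert by (intro Pi_pmf_insert) auto
  also have "\<dots> = map_pmf (\<lambda>(y, g). (\<lambda>z. if z \<in> A then g (h z) else d)(x := y))
      (pair_pmf (p (h x)) (Pi_pmf (h ` A) d p))"
    by (simp add: insert.IH[OF \<open>inj_on h A\<close>, symmetric] pair_map_pmf2 map_pmf_comp
        case_prod_unfold apsnd_def map_prod_def)
  also have "\<dots> = map_pmf (\<lambda>g z. if z \<in> insert x A then g (h z) else d)
      (map_pmf (\<lambda>(y, f). f(h x := y)) (pair_pmf (p (h x)) (Pi_pmf (h ` A) d p)))"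
    unfolding map_pmf_comp
    using insert.prems insert.hyps by (intro map_pmf_cong) (auto simp: fun_eq_iff inj_on_def)
  also have "map_pmf (\<lambda>(y, f). f(h x := y)) (pair_pmf (p (h x)) (Pi_pmf (h ` A) d p))
      = Pi_pmf (h ` insert x A) d p"
    using Pi_pmf_insert[of "h ` A" "h x" d p] \<open>h x \<notin> h ` A\<close> insert.hyps by simp
  finally show ?case
    by simp
qed simp

(* The law of a cell (G1 (i, j), first copy in G2 (i, j)) given S j = s; a deleted column has no
   copy, and the junk value hd [] stands in for it. *)
definition cell_pmf :: "'x pmf \<Rightarrow> ('x \<Rightarrow> 'y pmf) \<Rightarrow> nat \<Rightarrow> ('x \<times> 'y) pmf" where
  "cell_pmf pX pYX s =
     bind_pmf pX (\<lambda>x. if 1 \<le> s then map_pmf (Pair x) (pYX x) else return_pmf (x, hd []))"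

lemma cell_pmf_retained: "1 \<le> s \<Longrightarrow> cell_pmf pX pYX s = joint_pmf pX pYX"
  by (simp add: cell_pmf_def joint_pmf_def)

lemma map_fst_cell_pmf:
  fixes pX :: "'x pmf"
  shows "map_pmf fst (cell_pmf pX pYX s) = pX"
proof -
  have "map_pmf fst (if 1 \<le> s then map_pmf (Pair x) (pYX x) else return_pmf (x, hd [])) = return_pmf x"
    for x :: 'x
    by (simp add: map_pmf_comp)
  then show ?thesis
    by (simp add: cell_pmf_def map_bind_pmf bind_return_pmf')
qed

definition paired_cells :: "nat \<Rightarrow> nat \<Rightarrow> (nat \<times> nat \<Rightarrow> 'x) \<Rightarrow> (nat \<times> nat \<Rightarrow> 'y list)
    \<Rightarrow> nat \<times> nat \<Rightarrow> 'x \<times> 'y" where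
  "paired_cells B n G1 G2 = (\<lambda>c. if c \<in> {..<B} \<times> {..<n} then (G1 c, hd (G2 c)) else undefined)"

lemma map_paired_cells_noisy_G2:
  "map_pmf (paired_cells B n G1) (noisy_G2 pYX B n G1 S) =
     Pi_pmf ({..<B} \<times> {..<n}) undefined (\<lambda>c.
       if 1 \<le> S (snd c) then map_pmf (Pair (G1 c)) (pYX (G1 c)) else return_pmf (G1 c, hd []))"
proof -
  define A where "A = {..<B} \<times> {..<n}"
  define A1 where "A1 = {c \<in> A. 1 \<le> S (snd c)}"
  define T where "T = {(i, j, k). i < B \<and> j < n \<and> k < S j}"
  define p where "p = (\<lambda>(i, j, k::nat). pYX (G1 (i, j)))"
  define first where "first = (\<lambda>c::nat \<times> nat. (fst c, snd c, 0::nat))"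
  have "finite A" "finite A1"
    by (simp_all add: A_def A1_def)
  have "T \<subseteq> {..<B} \<times> (SIGMA j:{..<n}. {..<S j})"
    by (auto simp: T_def)
  then have "finite T"
    by (rule finite_subset) auto
  have "inj_on first A1" "first ` A1 \<subseteq> T"
    by (auto simp: first_def inj_on_def A1_def A_def T_def)
  have "Pi_pmf A undefined (\<lambda>c. if 1 \<le> S (snd c) then map_pmf (Pair (G1 c)) (pYX (G1 c))
            else return_pmf (G1 c, hd []))
      = Pi_pmf A undefined (\<lambda>c. map_pmf (Pair (G1 c))
            (if 1 \<le> S (snd c) then pYX (G1 c) else return_pmf (hd [])))"
    by (rule Pi_pmf_cong) auto
  also have "\<dots> = map_pmf (\<lambda>Y c. if c \<in> A then (G1 c, Y c) else undefined)
      (Pi_pmf A (hd []) (\<lambda>c. if 1 \<le> S (snd c) then pYX (G1 c) else return_pmf (hd [])))"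
    by (rule Pi_pmf_map_indexed[OF \<open>finite A\<close>])
  also have "Pi_pmf A (hd []) (\<lambda>c. if 1 \<le> S (snd c) then pYX (G1 c) else return_pmf (hd []))
      = Pi_pmf A1 (hd []) (\<lambda>c. pYX (G1 c))"
    unfolding A1_def by (rule Pi_pmf_if_set[OF \<open>finite A\<close>])
  also have "\<dots> = map_pmf (\<lambda>g c. if c \<in> A1 then g (first c) else hd []) (Pi_pmf (first ` A1) (hd []) p)"
    using Pi_pmf_reindex[OF \<open>finite A1\<close> \<open>inj_on first A1\<close>, of "hd []" p]
    by (simp add: p_def first_def case_prod_beta)
  also have "Pi_pmf (first ` A1) (hd []) p
      = map_pmf (\<lambda>f x. if x \<in> first ` A1 then f x else hd []) (Pi_pmf (first ` A1) undefined p)"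
    by (rule Pi_pmf_default_swap[symmetric]) (use \<open>finite A1\<close> in auto)
  also have "Pi_pmf (first ` A1) undefined p
      = map_pmf (\<lambda>f x. if x \<in> first ` A1 then f x else undefined) (Pi_pmf T undefined p)"
    by (rule Pi_pmf_subset[OF \<open>finite T\<close> \<open>first ` A1 \<subseteq> T\<close>])
  finally have "Pi_pmf A undefined (\<lambda>c. if 1 \<le> S (snd c) then map_pmf (Pair (G1 c)) (pYX (G1 c))
            else return_pmf (G1 c, hd []))
      = map_pmf (\<lambda>W c. if c \<in> A then (G1 c, if c \<in> A1 then W (first c) else hd []) else undefined)
          (Pi_pmf T undefined p)"
    unfolding map_pmf_comp by (rule trans, intro map_pmf_cong) (auto simp: fun_eq_iff)
  also have "\<dots> = map_pmf (paired_cells B n G1) (noisy_G2 pYX B n G1 S)"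
    unfolding noisy_G2_def map_pmf_comp T_def[symmetric] p_def[symmetric]
    by (intro map_pmf_cong) (auto simp: fun_eq_iff paired_cells_def A1_def first_def A_def hd_map upt_conv_Cons)
  finally show ?thesis
    unfolding A_def ..
qed

definition channel_output :: "'x pmf \<Rightarrow> ('x \<Rightarrow> 'y pmf) \<Rightarrow> nat \<Rightarrow> nat \<Rightarrow> (nat \<Rightarrow> nat)
    \<Rightarrow> ((nat \<times> nat \<Rightarrow> 'x) \<times> (nat \<times> nat \<Rightarrow> 'y list)) pmf" where
  "channel_output pX pYX B n S =
     bind_pmf (seed_G1 pX B n) (\<lambda>G1. map_pmf (Pair G1) (noisy_G2 pYX B n G1 S))"

lemma seeded_experiment_eq_bind_channel_output:
  "seeded_experiment pX pYX pS B n =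
     bind_pmf (rep_pattern pS n) (\<lambda>S. map_pmf (\<lambda>(G1, G2). (G1, S, G2)) (channel_output pX pYX B n S))"
  unfolding seeded_experiment_def channel_output_def
  by (subst bind_commute_pmf) (simp add: map_bind_pmf map_pmf_comp)

lemma map_paired_cells_channel_output:
  "map_pmf (\<lambda>(G1, G2). paired_cells B n G1 G2) (channel_output pX pYX B n S) =
     Pi_pmf ({..<B} \<times> {..<n}) undefined (\<lambda>c. cell_pmf pX pYX (S (snd c)))"
proof -
  have "Pi_pmf ({..<B} \<times> {..<n}) undefined (\<lambda>c. cell_pmf pX pYX (S (snd c)))
      = bind_pmf (seed_G1 pX B n) (\<lambda>G1. Pi_pmf ({..<B} \<times> {..<n}) undefined (\<lambda>c.
          if 1 \<le> S (snd c) then map_pmf (Pair (G1 c)) (pYX (G1 c)) else return_pmf (G1 c, hd [])))"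
    unfolding cell_pmf_def seed_G1_def by (rule Pi_pmf_bind) simp
  then show ?thesis
    by (simp add: channel_output_def map_bind_pmf map_pmf_comp map_paired_cells_noisy_G2)
qed

(* For a row r of paired cells, g the columns kept by a candidate I and rs the retained columns,
   this is the row's contribution to d_H(G1~(I), G2~_\<sigma>) - d_H(G1~(I_del), G2~_\<sigma>). *)
definition match_surplus :: "('y \<Rightarrow> 'x) \<Rightarrow> nat list \<Rightarrow> nat list \<Rightarrow> (nat \<Rightarrow> 'x \<times> 'y) \<Rightarrow> real" where
  "match_surplus \<sigma> g rs r =
     (\<Sum>t<length rs. of_bool (\<sigma> (snd (r (rs ! t))) = fst (r (rs ! t)))
                   - of_bool (\<sigma> (snd (r (rs ! t))) = fst (r (g ! t))))"

definition num_misaligned :: "nat list \<Rightarrow> nat list \<Rightarrow> nat" where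
  "num_misaligned g rs = card {t. t < length rs \<and> g ! t \<noteq> rs ! t}"

lemma abs_match_surplus_le: "\<bar>match_surplus \<sigma> g rs r\<bar> \<le> real (num_misaligned g rs)"
proof -
  have "\<bar>match_surplus \<sigma> g rs r\<bar> \<le> (\<Sum>t<length rs. if g ! t \<noteq> rs ! t then 1 else 0)"
    unfolding match_surplus_def by (rule order_trans[OF sum_abs sum_mono]) auto
  also have "\<dots> = real (num_misaligned g rs)"
    by (simp add: num_misaligned_def sum.If_cases Int_def conj_commute)
  finally show ?thesis .
qed

lemma expectation_of_bool_eq_prob:
  "measure_pmf.expectation p (\<lambda>x. of_bool (P x) :: real) = measure_pmf.prob p {x. P x}"
proof -
  have "(\<lambda>x. of_bool (P x) :: real) = indicator {x. P x}"
    by (auto simp: fun_eq_iff indicator_def)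
  then show ?thesis
    by simp
qed

lemma map_Pi_pmf_pair_components:
  assumes "finite A" "a \<in> A" "b \<in> A" "a \<noteq> b"
  shows "map_pmf (\<lambda>f. (f a, f b)) (Pi_pmf A d p) = pair_pmf (p a) (p b)"
proof -
  have "map_pmf (\<lambda>f. (f a, f b)) (Pi_pmf A d p) = map_pmf (\<lambda>f. (f a, f b)) (Pi_pmf {a, b} d p)"
    using assms by (simp add: Pi_pmf_subset[of A "{a, b}"] map_pmf_comp)
  also have "Pi_pmf {a, b} d p = map_pmf (\<lambda>(y, f). f(a := y)) (pair_pmf (p a) (Pi_pmf {b} d p))"
    using Pi_pmf_insert[of "{b}" a d p] assms by simp
  also have "Pi_pmf {b} d p = map_pmf (\<lambda>v z. if z = b then v else d) (p b)"
    by (rule Pi_pmf_singleton)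
  finally show ?thesis
    using assms by (simp add: map_pmf_comp pair_map_pmf2 case_prod_unfold apsnd_def map_prod_def)
qed

lemma expectation_match_surplus:
  fixes p :: "nat \<times> nat \<Rightarrow> ('x \<times> 'y) pmf"
  assumes "finite A"
    and idx: "\<And>t. t < length rs \<Longrightarrow> (i, g ! t) \<in> A \<and> (i, rs ! t) \<in> A"
    and retained: "\<And>t. t < length rs \<Longrightarrow> p (i, rs ! t) = joint_pmf pX pYX"
    and inputs: "\<And>t. t < length rs \<Longrightarrow> map_pmf fst (p (i, g ! t)) = pX"
  shows "measure_pmf.expectation (Pi_pmf A d p) (\<lambda>F. match_surplus \<sigma> g rs (\<lambda>k. F (i, k)))
    = real (num_misaligned g rs) * alignment_gap pX pYX \<sigma>"
proof -
  let ?P = "Pi_pmf A d p"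
  let ?match = "\<lambda>a b F. of_bool (\<sigma> (snd (F (i, a))) = fst (F (i, b))) :: real"
  have aligned: "measure_pmf.expectation ?P (?match (rs ! t) (rs ! t))
      = measure_pmf.prob (joint_pmf pX pYX) {(x, y). \<sigma> y = x}" if "t < length rs" for t
  proof -
    have "measure_pmf.expectation ?P (?match (rs ! t) (rs ! t))
        = measure_pmf.expectation (map_pmf (\<lambda>F. F (i, rs ! t)) ?P) (\<lambda>u. of_bool (\<sigma> (snd u) = fst u))"
      by simp
    also have "map_pmf (\<lambda>F. F (i, rs ! t)) ?P = joint_pmf pX pYX"
      using that idx retained \<open>finite A\<close> by (simp add: Pi_pmf_component)
    finally show ?thesis
      by (simp add: expectation_of_bool_eq_prob case_prod_unfold)
  qed
  have misaligned: "measure_pmf.expectation ?P (?match (rs ! t) (g ! t))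
      = measure_pmf.prob (pair_pmf (joint_pmf pX pYX) pX) {((x1, y1), x2). \<sigma> y1 = x2}"
    if "t < length rs" "g ! t \<noteq> rs ! t" for t
  proof -
    have "measure_pmf.expectation ?P (?match (rs ! t) (g ! t))
        = measure_pmf.expectation (map_pmf (apsnd fst) (map_pmf (\<lambda>F. (F (i, rs ! t), F (i, g ! t))) ?P))
            (\<lambda>(u, x). of_bool (\<sigma> (snd u) = x))"
      by (simp add: case_prod_unfold)
    also have "map_pmf (\<lambda>F. (F (i, rs ! t), F (i, g ! t))) ?P = pair_pmf (joint_pmf pX pYX) (p (i, g ! t))"
      using that idx retained \<open>finite A\<close> by (simp add: map_Pi_pmf_pair_components)
    also have "map_pmf (apsnd fst) \<dots> = pair_pmf (joint_pmf pX pYX) pX"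
      using that inputs by (simp add: pair_map_pmf2[symmetric])
    finally show ?thesis
      by (simp add: expectation_of_bool_eq_prob case_prod_unfold)
  qed
  have "measure_pmf.expectation ?P (\<lambda>F. match_surplus \<sigma> g rs (\<lambda>k. F (i, k)))
      = (\<Sum>t<length rs. measure_pmf.expectation ?P (?match (rs ! t) (rs ! t))
                      - measure_pmf.expectation ?P (?match (rs ! t) (g ! t)))"
    unfolding match_surplus_def
    by (subst Bochner_Integration.integral_sum)
       (auto intro!: sum.cong Bochner_Integration.integral_diff
          measure_pmf.integrable_const_bound[where B = 1])
  also have "\<dots> = (\<Sum>t<length rs. if g ! t \<noteq> rs ! t then alignment_gap pX pYX \<sigma> else 0)"
    by (intro sum.cong refl) (auto simp: aligned misaligned alignment_gap_def)
  also have "\<dots> = real (num_misaligned g rs) * alignment_gap pX pYX \<sigma>"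
    by (simp add: num_misaligned_def sum.If_cases Int_def conj_commute)
  finally show ?thesis .
qed

lemma indep_vars_match_surplus_rows:
  fixes p :: "nat \<times> nat \<Rightarrow> ('x::countable \<times> 'y::countable) pmf"
  assumes idx: "\<And>t. t < length rs \<Longrightarrow> g ! t < n \<and> rs ! t < n"
  shows "prob_space.indep_vars (measure_pmf (Pi_pmf ({..<B} \<times> {..<n}) d p)) (\<lambda>_. borel)
           (\<lambda>i F. match_surplus \<sigma> g rs (\<lambda>k. F (i, k))) {..<B}"
proof -
  let ?P = "Pi_pmf ({..<B} \<times> {..<n}) d p"
  define row where "row = (\<lambda>i::nat. {i} \<times> {..<n})"
  have "prob_space.indep_vars (measure_pmf ?P) (\<lambda>_. count_space UNIV) (\<lambda>c F. F c) ({..<B} \<times> {..<n})"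
    by (rule indep_vars_Pi_pmf) simp
  then have "prob_space.indep_vars (measure_pmf ?P) (\<lambda>i. PiM (row i) (\<lambda>_. count_space UNIV))
      (\<lambda>i F. restrict F (row i)) {..<B}"
    by (rule prob_space.indep_vars_restrict[OF measure_pmf.prob_space_axioms]) (auto simp: row_def disjoint_family_on_def)
  then have "prob_space.indep_vars (measure_pmf ?P) (\<lambda>_. borel)
      (\<lambda>i F. match_surplus \<sigma> g rs (\<lambda>k. restrict F (row i) (i, k))) {..<B}"
  proof (rule prob_space.indep_vars_compose2[OF measure_pmf.prob_space_axioms])
    fix i
    have "(i, g ! t) \<in> row i" "(i, rs ! t) \<in> row i" if "t < length rs" for t
      using idx[OF that] by (simp_all add: row_def)
    then show "(\<lambda>r. match_surplus \<sigma> g rs (\<lambda>k. r (i, k)))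
        \<in> borel_measurable (PiM (row i) (\<lambda>_. count_space UNIV))"
      unfolding match_surplus_def by (intro borel_measurable_sum) measurable
  qed
  also have "(\<lambda>i F. match_surplus \<sigma> g rs (\<lambda>k. restrict F (row i) (i, k)))
      = (\<lambda>i F. match_surplus \<sigma> g rs (\<lambda>k. F (i, k)))"
    using idx by (intro ext sum.cong refl) (simp add: match_surplus_def row_def)
  finally show ?thesis .
qed

lemma prob_sum_match_surplus_nonpos_le:
  fixes p :: "nat \<times> nat \<Rightarrow> ('x::countable \<times> 'y::countable) pmf"
  assumes idx: "\<And>t. t < length rs \<Longrightarrow> g ! t < n \<and> rs ! t < n"
    and retained: "\<And>i t. t < length rs \<Longrightarrow> p (i, rs ! t) = joint_pmf pX pYX"
    and inputs: "\<And>i t. t < length rs \<Longrightarrow> map_pmf fst (p (i, g ! t)) = pX"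
    and misaligned: "num_misaligned g rs > 0"
    and gap: "alignment_gap pX pYX \<sigma> \<ge> 0"
  shows "measure_pmf.prob (Pi_pmf ({..<B} \<times> {..<n}) d p)
           {F. (\<Sum>i<B. match_surplus \<sigma> g rs (\<lambda>k. F (i, k))) \<le> 0}
         \<le> exp (- real B * (alignment_gap pX pYX \<sigma>)\<^sup>2 / 2)"
proof (cases "B = 0")
  case False
  define P where "P = Pi_pmf ({..<B} \<times> {..<n}) d p"
  define m where "m = real (num_misaligned g rs)"
  define \<delta> where "\<delta> = alignment_gap pX pYX \<sigma>"
  define X where "X = (\<lambda>(i::nat) F. match_surplus \<sigma> g rs (\<lambda>k. F (i, k)))"
  interpret Hoeffding_ineq "measure_pmf P" "{..<B}" X "\<lambda>_. - m" "\<lambda>_. m" "real B * (m * \<delta>)"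
  proof unfold_locales
    show "prob_space.indep_vars (measure_pmf P) (\<lambda>_. borel) X {..<B}"
      unfolding P_def X_def using idx by (rule indep_vars_match_surplus_rows)
    show "AE F in measure_pmf P. X i F \<in> {- m..m}" for i
    proof (intro AE_I2)
      fix F
      have "\<bar>X i F\<bar> \<le> m"
        unfolding X_def m_def by (rule abs_match_surplus_le)
      then show "X i F \<in> {- m..m}"
        by (simp add: abs_le_iff)
    qed
    show "real B * (m * \<delta>) \<equiv> (\<Sum>i<B. measure_pmf.expectation P (X i))"
      using idx retained inputs
      by (simp add: P_def X_def m_def \<delta>_def expectation_match_surplus)
  qed simp
  have "measure_pmf.prob P {F. (\<Sum>i<B. X i F) \<le> real B * (m * \<delta>) - real B * (m * \<delta>)}
      \<le> exp (- 2 * (real B * (m * \<delta>))\<^sup>2 / (\<Sum>i<B. (m - - m)\<^sup>2))"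
    using Hoeffding_ineq_le[of "real B * (m * \<delta>)"] misaligned False gap
    by (simp add: m_def \<delta>_def)
  also have "- 2 * (real B * (m * \<delta>))\<^sup>2 / (\<Sum>i<B. (m - - m)\<^sup>2) = - real B * \<delta>\<^sup>2 / 2"
    using misaligned False by (simp add: m_def power2_eq_square field_simps)
  finally show ?thesis
    by (simp add: P_def X_def \<delta>_def)
qed simp

definition kept_cols :: "nat \<Rightarrow> nat set \<Rightarrow> nat list" where
  "kept_cols n I = filter (\<lambda>j. j \<notin> I) [0..<n]"

lemma kept_cols_I_del: "kept_cols n (I_del S n) = retained_cols S n"
  unfolding kept_cols_def retained_cols_def I_del_def by (rule filter_cong) auto

lemma set_kept_cols: "set (kept_cols n I) = {j. j < n \<and> j \<notin> I}"
  by (auto simp: kept_cols_def)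

lemma length_kept_cols:
  assumes "I \<subseteq> {..<n}" "card I = n - Ktilde S n"
  shows "length (kept_cols n I) = Ktilde S n"
proof -
  have "Ktilde S n \<le> n"
    using length_filter_le[of _ "[0..<n]"] by (simp add: Ktilde_def retained_cols_def)
  have "length (kept_cols n I) = card ({..<n} - I)"
    by (simp add: kept_cols_def distinct_card[symmetric] set_diff_eq)
  also have "\<dots> = n - card I"
    using assms(1) by (simp add: card_Diff_subset finite_subset)
  finally show ?thesis
    using assms(2) \<open>Ktilde S n \<le> n\<close> by simp
qed

lemma num_misaligned_kept_cols_pos:
  assumes "I \<subseteq> {..<n}" "card I = n - Ktilde S n" "I \<noteq> I_del S n"
  shows "num_misaligned (kept_cols n I) (retained_cols S n) > 0"
proof (rule ccontr)
  assume "\<not> ?thesis"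
  then have "kept_cols n I ! t = retained_cols S n ! t" if "t < length (retained_cols S n)" for t
    using that by (auto simp: num_misaligned_def)
  moreover have "length (kept_cols n I) = length (retained_cols S n)"
    using length_kept_cols[OF assms(1,2)] by (simp add: Ktilde_def)
  ultimately have "kept_cols n I = kept_cols n (I_del S n)"
    by (simp add: kept_cols_I_del nth_equalityI)
  then have "{j. j < n \<and> j \<notin> I} = {j. j < n \<and> j \<notin> I_del S n}"
    by (metis set_kept_cols)
  then have "I = I_del S n"
    using assms(1) unfolding I_del_def by blast
  with assms(3) show False ..
qed

lemma hamming_dist_diff_eq_sum_match_surplus:
  assumes "length (kept_cols n I) = Ktilde S n"
  shows "real (hamming_dist B (Ktilde S n) (G1tilde G1 n I) (\<sigma> \<circ> G2tilde G2 S n))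
       - real (hamming_dist B (Ktilde S n) (G1tilde G1 n (I_del S n)) (\<sigma> \<circ> G2tilde G2 S n))
       = (\<Sum>i<B. match_surplus \<sigma> (kept_cols n I) (retained_cols S n) (\<lambda>k. paired_cells B n G1 G2 (i, k)))"
proof -
  define rs where "rs = retained_cols S n"
  define mismatches where "mismatches = (\<lambda>I' i t.
    of_bool (G1 (i, kept_cols n I' ! t) \<noteq> \<sigma> (hd (G2 (i, rs ! t)))) :: real)"
  have hamming: "real (hamming_dist B (Ktilde S n) (G1tilde G1 n I') (\<sigma> \<circ> G2tilde G2 S n))
      = (\<Sum>i<B. \<Sum>t<length rs. mismatches I' i t)" for I'
    unfolding hamming_dist_def of_nat_sum
    by (intro sum.cong refl) (simp_all add: G1tilde_def G2tilde_def kept_cols_def mismatches_def rs_def Ktilde_def)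
  have in_range: "kept_cols n I ! t < n" "rs ! t < n" if "t < length rs" for t
    using that assms nth_mem[of t "kept_cols n I"] nth_mem[of t rs]
    by (auto simp: rs_def Ktilde_def set_kept_cols retained_cols_def)
  have "(\<Sum>t<length rs. mismatches I i t - mismatches (I_del S n) i t)
      = match_surplus \<sigma> (kept_cols n I) rs (\<lambda>k. paired_cells B n G1 G2 (i, k))" if "i < B" for i
    unfolding match_surplus_def
    using in_range \<open>i < B\<close>
    by (intro sum.cong refl) (auto simp: mismatches_def paired_cells_def kept_cols_I_del rs_def)
  then show ?thesis
    by (simp add: hamming rs_def flip: sum_subtractf)
qed

lemma prob_channel_output_not_detected_le:
  fixes pX :: "'x::finite pmf" and pYX :: "'x \<Rightarrow> 'x pmf"
  assumes gap: "alignment_gap pX pYX \<sigma> \<ge> 0"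
  shows "measure_pmf.prob (channel_output pX pYX B n S)
           {(G1, G2). \<not> deletion_detected \<sigma> B n G1 S G2}
         \<le> 2 ^ n * exp (- real B * (alignment_gap pX pYX \<sigma>)\<^sup>2 / 2)"
proof -
  let ?bound = "exp (- real B * (alignment_gap pX pYX \<sigma>)\<^sup>2 / 2)"
  let ?rs = "retained_cols S n"
  define candidates where
    "candidates = {I. I \<subseteq> {..<n} \<and> card I = n - Ktilde S n \<and> I \<noteq> I_del S n}"
  define confused where "confused = (\<lambda>I. {(G1, G2).
    (\<Sum>i<B. match_surplus \<sigma> (kept_cols n I) ?rs (\<lambda>k. paired_cells B n G1 G2 (i, k))) \<le> 0})"
  have "finite candidates"
    by (rule finite_subset[of _ "Pow {..<n}"]) (auto simp: candidates_def)
  have "card candidates \<le> card (Pow {..<n})"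
    by (rule card_mono) (auto simp: candidates_def)
  then have card_candidates: "real (card candidates) \<le> 2 ^ n"
    by (simp add: card_Pow flip: of_nat_le_iff)
  have "{(G1, G2). \<not> deletion_detected \<sigma> B n G1 S G2} \<subseteq> (\<Union>I\<in>candidates. confused I)"
  proof safe
    fix G1 G2 assume "\<not> deletion_detected \<sigma> B n G1 S G2"
    then obtain I where I: "I \<in> candidates"
      and "\<not> hamming_dist B (Ktilde S n) (G1tilde G1 n (I_del S n)) (\<sigma> \<circ> G2tilde G2 S n)
              < hamming_dist B (Ktilde S n) (G1tilde G1 n I) (\<sigma> \<circ> G2tilde G2 S n)"
      unfolding deletion_detected_def Let_def candidates_def by blast
    moreover have "length (kept_cols n I) = Ktilde S n"
      using I by (intro length_kept_cols) (auto simp: candidates_def)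
    ultimately have "(G1, G2) \<in> confused I"
      using hamming_dist_diff_eq_sum_match_surplus[of n I S B G1 \<sigma> G2]
      by (simp add: confused_def)
    with I show "(G1, G2) \<in> (\<Union>I\<in>candidates. confused I)"
      by blast
  qed
  then have "measure_pmf.prob (channel_output pX pYX B n S) {(G1, G2). \<not> deletion_detected \<sigma> B n G1 S G2}
      \<le> (\<Sum>I\<in>candidates. measure_pmf.prob (channel_output pX pYX B n S) (confused I))"
    by (intro order_trans[OF measure_pmf.finite_measure_mono
          measure_pmf.finite_measure_subadditive_finite] \<open>finite candidates\<close>) auto
  also have "\<dots> \<le> (\<Sum>I\<in>candidates. ?bound)"
  proof (rule sum_mono)
    fix I assume I: "I \<in> candidates"
    then have len: "length (kept_cols n I) = Ktilde S n"
      by (intro length_kept_cols) (auto simp: candidates_def)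
    have "confused I = (\<lambda>(G1, G2). paired_cells B n G1 G2)
        -` {F. (\<Sum>i<B. match_surplus \<sigma> (kept_cols n I) ?rs (\<lambda>k. F (i, k))) \<le> 0}"
      by (auto simp: confused_def)
    then have "measure_pmf.prob (channel_output pX pYX B n S) (confused I)
        = measure_pmf.prob (map_pmf (\<lambda>(G1, G2). paired_cells B n G1 G2) (channel_output pX pYX B n S))
            {F. (\<Sum>i<B. match_surplus \<sigma> (kept_cols n I) ?rs (\<lambda>k. F (i, k))) \<le> 0}"
      by (simp only: measure_map_pmf)
    also have "map_pmf (\<lambda>(G1, G2). paired_cells B n G1 G2) (channel_output pX pYX B n S)
        = Pi_pmf ({..<B} \<times> {..<n}) undefined (\<lambda>c. cell_pmf pX pYX (S (snd c)))"
      by (rule map_paired_cells_channel_output)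
    also have "measure_pmf.prob (Pi_pmf ({..<B} \<times> {..<n}) undefined (\<lambda>c. cell_pmf pX pYX (S (snd c))))
        {F. (\<Sum>i<B. match_surplus \<sigma> (kept_cols n I) ?rs (\<lambda>k. F (i, k))) \<le> 0} \<le> ?bound"
    proof (rule prob_sum_match_surplus_nonpos_le)
      fix t assume "t < length ?rs"
      then have "kept_cols n I ! t \<in> set (kept_cols n I)" "?rs ! t \<in> set ?rs"
        using len by (simp_all add: Ktilde_def)
      then show "kept_cols n I ! t < n \<and> ?rs ! t < n"
        by (simp add: set_kept_cols retained_cols_def)
      show "cell_pmf pX pYX (S (snd (i, ?rs ! t))) = joint_pmf pX pYX" for i
        using \<open>?rs ! t \<in> set ?rs\<close> by (intro cell_pmf_retained) (simp add: retained_cols_def)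
      show "map_pmf fst (cell_pmf pX pYX (S (snd (i, kept_cols n I ! t)))) = pX" for i
        by (rule map_fst_cell_pmf)
    next
      show "num_misaligned (kept_cols n I) ?rs > 0"
        using I by (intro num_misaligned_kept_cols_pos) (auto simp: candidates_def)
    qed (rule gap)
    finally show "measure_pmf.prob (channel_output pX pYX B n S) (confused I) \<le> ?bound" .
  qed
  also have "\<dots> \<le> 2 ^ n * ?bound"
    using card_candidates by (simp add: mult_right_mono)
  finally show ?thesis .
qed

lemma measure_bind_pmf_le:
  assumes "\<And>x. measure_pmf.prob (f x) A \<le> b"
  shows "measure_pmf.prob (bind_pmf p f) A \<le> b"
proof -
  have "0 \<le> b"
    using assms[of undefined] measure_nonneg[of "measure_pmf (f undefined)" A] by linarith
  have "emeasure (measure_pmf (bind_pmf p f)) A = (\<integral>\<^sup>+x. emeasure (measure_pmf (f x)) A \<partial>p)"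
    by simp
  also have "\<dots> \<le> (\<integral>\<^sup>+x. ennreal b \<partial>p)"
    using assms by (intro nn_integral_mono) (simp add: measure_pmf.emeasure_eq_measure ennreal_leI)
  also have "\<dots> = ennreal b"
    by (simp add: measure_pmf.emeasure_space_1)
  finally show ?thesis
    using \<open>0 \<le> b\<close> by (simp add: measure_pmf.emeasure_eq_measure)
qed

lemma prob_seeded_experiment_not_detected_le:
  fixes pX :: "'x::finite pmf" and pYX :: "'x \<Rightarrow> 'x pmf"
  assumes "alignment_gap pX pYX \<sigma> \<ge> 0"
  shows "measure_pmf.prob (seeded_experiment pX pYX pS B n)
           {(G1, S, G2). \<not> deletion_detected \<sigma> B n G1 S G2}
         \<le> 2 ^ n * exp (- real B * (alignment_gap pX pYX \<sigma>)\<^sup>2 / 2)"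
  unfolding seeded_experiment_eq_bind_channel_output
  using prob_channel_output_not_detected_le[OF assms]
  by (intro measure_bind_pmf_le) (simp add: measure_map_pmf vimage_def case_prod_unfold)

lemma deletion_detected_tendsto_1:
  fixes pX :: "'x::finite pmf" and pYX :: "'x \<Rightarrow> 'x pmf"
  assumes gap: "alignment_gap pX pYX \<sigma> > 0"
    and seeds: "\<And>n. real (B n) \<ge> 4 / (alignment_gap pX pYX \<sigma>)\<^sup>2 * real n"
  shows "(\<lambda>n. measure_pmf.prob (seeded_experiment pX pYX pS (B n) n)
            {(G1, S, G2). deletion_detected \<sigma> (B n) n G1 S G2}) \<longlonglongrightarrow> 1"
proof -
  define \<delta> where "\<delta> = alignment_gap pX pYX \<sigma>"
  define q :: real where "q = 2 * exp (- 2)"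
  have "2 < exp (2::real)"
    using exp_ge_add_one_self[of "2::real"] by simp
  then have "0 \<le> q" "q < 1"
    by (simp_all add: q_def exp_minus field_simps)
  have error_le: "2 ^ n * exp (- real (B n) * \<delta>\<^sup>2 / 2) \<le> q ^ n" for n
  proof -
    have "4 * real n \<le> \<delta>\<^sup>2 * real (B n)"
      using seeds[of n] gap by (simp add: \<delta>_def field_simps)
    then have "exp (- real (B n) * \<delta>\<^sup>2 / 2) \<le> exp (- 2) ^ n"
      by (simp add: exp_of_nat_mult[symmetric] mult.commute)
    then show ?thesis
      by (simp add: q_def power_mult_distrib)
  qed
  let ?P = "\<lambda>n. measure_pmf.prob (seeded_experiment pX pYX pS (B n) n)
                 {(G1, S, G2). deletion_detected \<sigma> (B n) n G1 S G2}"
  have "1 - q ^ n \<le> ?P n" for n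
  proof -
    have "UNIV - {(G1, S, G2). deletion_detected \<sigma> (B n) n G1 S G2}
        = {(G1, S, G2). \<not> deletion_detected \<sigma> (B n) n G1 S G2}"
      by auto
    then have "1 - ?P n = measure_pmf.prob (seeded_experiment pX pYX pS (B n) n)
                       {(G1, S, G2). \<not> deletion_detected \<sigma> (B n) n G1 S G2}"
      using measure_pmf.prob_compl[of "{(G1, S, G2). deletion_detected \<sigma> (B n) n G1 S G2}"] by simp
    also have "\<dots> \<le> q ^ n"
      using prob_seeded_experiment_not_detected_le[of pX pYX \<sigma> pS "B n" n] gap error_le[of n]
      by (simp add: \<delta>_def)
    finally show ?thesis
      by simp
  qed
  then have "\<forall>\<^sub>F n in sequentially. 1 - q ^ n \<le> ?P n"
    by simp
  moreover have "\<forall>\<^sub>F n in sequentially. ?P n \<le> 1"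
    by simp
  moreover have "(\<lambda>n. 1 - q ^ n) \<longlonglongrightarrow> 1"
    using tendsto_diff[OF tendsto_const LIMSEQ_power_zero[of q]] \<open>0 \<le> q\<close> \<open>q < 1\<close> by simp
  ultimately show ?thesis
    by (rule tendsto_sandwich) (rule tendsto_const)
qed

theorem lemma2:
  fixes pX :: "'x::finite pmf" and pYX :: "'x \<Rightarrow> 'x pmf"
  assumes dep: "joint_pmf pX pYX \<noteq> pair_pmf pX (out_pmf pX pYX)"
  shows "(\<exists>\<sigma>. bij \<sigma> \<and>
            measure_pmf.prob (joint_pmf pX pYX) {(x, y). \<sigma> y = x}
          > measure_pmf.prob (pair_pmf (joint_pmf pX pYX) pX) {((x1, y1), x2). \<sigma> y1 = x2})
    \<and> (\<forall>\<sigma>. bij \<sigma> \<and>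
            measure_pmf.prob (joint_pmf pX pYX) {(x, y). \<sigma> y = x}
          > measure_pmf.prob (pair_pmf (joint_pmf pX pYX) pX) {((x1, y1), x2). \<sigma> y1 = x2}
        \<longrightarrow> (\<exists>c::real. c > 0 \<and>
              (\<forall>(pS :: nat pmf) (smax :: nat) (B :: nat \<Rightarrow> nat).
                 set_pmf pS \<subseteq> {0..smax} \<and> (\<forall>n. real (B n) \<ge> c * real n) \<longrightarrow>
                 (\<lambda>n. measure_pmf.prob (seeded_experiment pX pYX pS (B n) n)
                        {(G1, S, G2). deletion_detected \<sigma> (B n) n G1 S G2})
                 \<longlonglongrightarrow> 1)))"
proof (intro conjI allI impI)
  show "\<exists>\<sigma>. bij \<sigma> \<and> measure_pmf.prob (joint_pmf pX pYX) {(x, y). \<sigma> y = x}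
      > measure_pmf.prob (pair_pmf (joint_pmf pX pYX) pX) {((x1, y1), x2). \<sigma> y1 = x2}"
    using exists_bij_alignment_gap_pos[OF dep] by (simp add: alignment_gap_def)
next
  fix \<sigma> :: "'x \<Rightarrow> 'x"
  assume "bij \<sigma> \<and> measure_pmf.prob (joint_pmf pX pYX) {(x, y). \<sigma> y = x}
      > measure_pmf.prob (pair_pmf (joint_pmf pX pYX) pX) {((x1, y1), x2). \<sigma> y1 = x2}"
  then have gap: "alignment_gap pX pYX \<sigma> > 0"
    by (simp add: alignment_gap_def)
  \<comment> \<open>the bound holds for every repetition pattern\<close>
  have "(\<lambda>n. measure_pmf.prob (seeded_experiment pX pYX pS (B n) n)
           {(G1, S, G2). deletion_detected \<sigma> (B n) n G1 S G2}) \<longlonglongrightarrow> 1"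
    if "\<forall>n. real (B n) \<ge> 4 / (alignment_gap pX pYX \<sigma>)\<^sup>2 * real n" for pS B
    using gap that by (intro deletion_detected_tendsto_1) auto
  with gap show "\<exists>c::real. c > 0 \<and>
      (\<forall>(pS :: nat pmf) (smax :: nat) (B :: nat \<Rightarrow> nat).
         set_pmf pS \<subseteq> {0..smax} \<and> (\<forall>n. real (B n) \<ge> c * real n) \<longrightarrow>
         (\<lambda>n. measure_pmf.prob (seeded_experiment pX pYX pS (B n) n)
                {(G1, S, G2). deletion_detected \<sigma> (B n) n G1 S G2}) \<longlonglongrightarrow> 1)"
    by (intro exI[of _ "4 / (alignment_gap pX pYX \<sigma>)\<^sup>2"]) simp
qed

end
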